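(* Let $\tau=\frac{1+\sqrt5}{2}$, $\sigma=\frac{1-\sqrt5}{2}$, let $l_1,\dots,l_6$ be the standard orthonormal basis of $\mathbb{R}^6$, and let $D_6=\{\sum_{i=1}^6 m_i l_i : m_i\in\mathbb{Z},\ \sum_i m_i \text{ even}\}$. Let $\pi_\parallel:\mathbb{R}^6\to\mathbb{R}^3$ be the linear map with, writing $s=\sqrt{2(2+\tau)}$, $$\pi_\parallel(l_1)=\tfrac1s(1,\tau,0),\ \pi_\parallel(l_2)=\tfrac1s(-1,\tau,0),\ \pi_\parallel(l_3)=\tfrac1s(0,1,\tau),\ \pi_\parallel(l_4)=\tfrac1s(0,1,-\tau),\ \pi_\parallel(l_5)=\tfrac1s(\tau,0,1),\ \pi_\parallel(l_6)=\tfrac1s(-\tau,0,1).$$ Let $H_3\subset O(3)$ be the group generated by $$R_1=\begin{bmatrix}-1&0&0\\0&1&0\\0&0&1\end{bmatrix},\quad R_2=\frac12\begin{bmatrix}1&-\sigma&-\tau\\-\sigma&\tau&1\\-\tau&1&\sigma\end{bmatrix},\quad R_3=\begin{bmatrix}1&0&0\\0&1&0\\0&0&-1\end{bmatrix}.$$ Let $m_1,m_2\in\mathbb{Z}$ with $m_1+m_2$ even and $(m_1,m_2)\neq(0,0)$, and put $c=\sqrt{\tfrac{2}{2+\tau}}\,(m_1-m_2+2m_2\tau)$. Then each of the following seven vectors $\lambda$ lies in $D_6$, its projection $\pi_\parallel(\lambda)$ equals the stated vector of $\mathbb{R}^3$, and the $H_3$-orbit of $\pi_\parallel(\lambda)$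 is the vertex set of the stated polyhedron: (1) $\lambda=m_1l_1+m_2(l_2+l_3+l_4+l_5-l_6)$; $\pi_\parallel(\lambda)=\frac c2(1,\tau,0)$; regular icosahedron. (2) $\lambda=\frac12[(m_1+3m_2)(l_1+l_2+l_3)+(m_1-m_2)(l_4+l_5+l_6)]$; $\pi_\parallel(\lambda)=\frac c2(0,\tau^2,1)$; regular dodecahedron. (3) $\lambda=(m_1+m_2)(l_1+l_2)+2m_2(l_3+l_4)$; $\pi_\parallel(\lambda)=c(0,\tau,0)$; icosidodecahedron. (4) $\lambda=(2m_1+m_2)l_1+(m_1+2m_2)l_2+m_2(3l_3+3l_4+l_5-l_6)$; $\pi_\parallel(\lambda)=\frac c2(1,3\tau,0)$; truncated icosahedron. (5) $\lambda=\frac12[3(m_1+m_2)l_1+(m_1+5m_2)(l_2+l_3)+(m_1+m_2)(l_4+l_5)+(m_1-3m_2)l_6]$; $\pi_\parallel(\lambda)=\frac c2(1,2\tau+1,1)$; small rhombicosidodecahedron. (6) $\lambda=\frac12[(3m_1+5m_2)(l_1+l_2)+(m_1+7m_2)l_3+(m_1+3m_2)l_4+(m_1-m_2)(l_5+l_6)]$; $\pi_\parallel(\lambda)=\frac c2(0,3\tau+1,1)$; truncated dodecahedron. (7) $\lambda=\frac12[5(m_1+m_2)l_1+(3m_1+7m_2)l_2+(m_1+9m_2)l_3+(m_1+5m_2)l_4+(m_1+m_2)l_5+(m_1-3m_2)l_6]$; $\pi_\parallel(\lambda)=\frac c2(1,4\tau+1,1)$; great rhombicosidodecahedron.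
   Context: $D_6$ is the root lattice of type $D_6$, written in the orthonormal basis $l_i$. The map $\pi_\parallel$ is the projection onto one of two complementary 3-dimensional subspaces invariant under an icosahedral subgroup of the point group of $D_6$; $H_3$ is the icosahedral reflection group (of order 120) acting on that subspace. The weights of $D_6$ are $\omega_1=l_1$, $\omega_2=l_1+l_2$, $\omega_3=l_1+l_2+l_3$, $\omega_4=l_1+l_2+l_3+l_4$, $\omega_5=\frac12(l_1+\dots+l_5-l_6)$, $\omega_6=\frac12(l_1+\dots+l_6)$; in these terms the seven vectors are respectively $(m_1-m_2)\omega_1+2m_2\omega_5$, $(m_1-m_2)\omega_6+2m_2\omega_3$, $(m_1-m_2)\omega_2+2m_2\omega_4$, $(m_1-m_2)(\omega_1+\omega_2)+2m_2(\omega_4+\omega_5)$, $(m_1-m_2)(\omega_1+\omega_6)+2m_2(\omega_3+\omega_5)$, $(m_1-m_2)(\omega_2+\omega_6)+2m_2(\omega_3+\omega_4)$, $(m_1-m_2)(\omega_1+\omega_2+\omega_6)+2m_2(\omega_3+\omega_4+\omega_5)$. *)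

theory Defs
  imports "HOL-Analysis.Analysis"
begin

definition tau :: real where "tau = (1 + sqrt 5) / 2"
definition sigma :: real where "sigma = (1 - sqrt 5) / 2"

text \<open>Standard orthonormal basis l_1, ..., l_6 of R^6 (indices are elements of the type 6;
  the literal 6 denotes the sixth index).\<close>
definition l :: "6 \<Rightarrow> real^6" where "l i = axis i 1"

definition D6 :: "(real^6) set" where
  "D6 = {x. (\<forall>i. x $ i \<in> \<int>) \<and> (\<exists>k::int. (\<Sum>i\<in>UNIV. x $ i) = 2 * of_int k)}"

definition pi_par :: "real^6 \<Rightarrow> real^3" where
  "pi_par x = (1 / sqrt (2 * (2 + tau))) *\<^sub>R
     (  (x $ 1) *\<^sub>R vector [1, tau, 0]
      + (x $ 2) *\<^sub>R vector [-1, tau, 0]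
      + (x $ 3) *\<^sub>R vector [0, 1, tau]
      + (x $ 4) *\<^sub>R vector [0, 1, -tau]
      + (x $ 5) *\<^sub>R vector [tau, 0, 1]
      + (x $ 6) *\<^sub>R vector [-tau, 0, 1])"

definition R1 :: "real^3^3" where
  "R1 = vector [vector [-1, 0, 0], vector [0, 1, 0], vector [0, 0, 1]]"
definition R2 :: "real^3^3" where
  "R2 = (1/2) *\<^sub>R vector [vector [1, -sigma, -tau], vector [-sigma, tau, 1], vector [-tau, 1, sigma]]"
definition R3 :: "real^3^3" where
  "R3 = vector [vector [1, 0, 0], vector [0, 1, 0], vector [0, 0, -1]]"

inductive_set H3 :: "(real^3^3) set" where
  H3_id: "mat 1 \<in> H3"
| H3_gen: "A \<in> H3 \<Longrightarrow> g \<in> {R1, R2, R3} \<Longrightarrow> g ** A \<in> H3"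
| H3_inv: "A \<in> H3 \<Longrightarrow> g \<in> {R1, R2, R3} \<Longrightarrow> matrix_inv g ** A \<in> H3"

definition H3_orbit :: "real^3 \<Rightarrow> (real^3) set" where
  "H3_orbit p = {A *v p | A. A \<in> H3}"

text \<open>Standard vertex coordinates: all even (cyclic) permutations of all sign choices.\<close>
definition EP :: "real \<Rightarrow> real \<Rightarrow> real \<Rightarrow> (real^3) set" where
  "EP a b c = (\<Union>(s1,s2,s3) \<in> {1,-1} \<times> {1,-1} \<times> {1,-1::real}.
      {vector [s1*a, s2*b, s3*c], vector [s2*b, s3*c, s1*a], vector [s3*c, s1*a, s2*b]})"

definition std_icosahedron :: "(real^3) set" where
  "std_icosahedron = EP 0 1 tau"
definition std_dodecahedron :: "(real^3) set" where
  "std_dodecahedron = EP 1 1 1 \<union> EP 0 (1/tau) tau"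
definition std_icosidodecahedron :: "(real^3) set" where
  "std_icosidodecahedron = EP 0 0 tau \<union> EP (1/2) (tau/2) (tau^2/2)"
definition std_truncated_icosahedron :: "(real^3) set" where
  "std_truncated_icosahedron = EP 0 1 (3*tau) \<union> EP 1 (2+tau) (2*tau) \<union> EP tau 2 (tau^3)"
definition std_small_rhombicosidodecahedron :: "(real^3) set" where
  "std_small_rhombicosidodecahedron = EP 1 1 (tau^3) \<union> EP (tau^2) tau (2*tau) \<union> EP (2+tau) 0 (tau^2)"
definition std_truncated_dodecahedron :: "(real^3) set" where
  "std_truncated_dodecahedron = EP 0 (1/tau) (2+tau) \<union> EP (1/tau) tau (2*tau) \<union> EP tau 2 (tau+1)"
definition std_great_rhombicosidodecahedron :: "(real^3) set" where
  "std_great_rhombicosidodecahedron = EP (1/tau) (1/tau) (3+tau) \<union> EP (2/tau) tau (1+2*tau)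
     \<union> EP (1/tau) (tau^2) (3*tau - 1) \<union> EP (2*tau - 1) 2 (2+tau) \<union> EP tau 3 (2*tau)"

definition similar_to :: "(real^3) set \<Rightarrow> (real^3) set \<Rightarrow> bool" where
  "similar_to S T \<longleftrightarrow> (\<exists>r Q b. r > 0 \<and> orthogonal_matrix Q \<and> S = (\<lambda>x. r *\<^sub>R (Q *v x) + b) ` T)"

end

theory Submission
  imports Defs
begin

text \<open>
  Every lambda of the theorem is (m1 - m2) w + 2 m2 w', where w is a sum of the fundamental
  weights omega1, omega2, omega6 of D6 and w' is the corresponding sum of omega5, omega4, omega3.
  Twice each fundamental weight lies in D6, hence so does lambda; and pi_par maps omega5, omega4,
  omega3 to tau times the images of omega1, omega2, omega6, so pi_par lambda is
  (m1 - m2 + 2 m2 tau) pi_par w, a nonzero multiple of pi_par w because sqrt 5 is irrational.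

  The H3-orbit of each of the seven vertices pi_par w is then determined exactly.  Its points
  have coordinates in (1/2) Z[tau], and a certificate checked by evaluation shows that the vertex
  set of the standard polyhedron (after swapping two coordinates and rescaling where needed)
  contains the vertex, is closed under the three generating reflections, and that each of its
  other points is moved strictly up by some generator with respect to a linear height, so that
  it is reachable from the vertex.
\<close>

section \<open>The golden ratio\<close>

lemma tau_gt_1: "tau > 1"
  unfolding tau_def by simp

lemma tau_squared: "tau\<^sup>2 = tau + 1"
  unfolding tau_def by (simp add: power2_eq_square field_simps)

lemma tau_times_tau: "tau * tau = tau + 1"
  using tau_squared by (simp add: power2_eq_square)

lemma tau_times_tau_times: "tau * (tau * x) = tau * x + x"
proof -
  have "tau * (tau * x) = (tau * tau) * x"
    by (simp only: mult.assoc)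
  also have "\<dots> = tau * x + x"
    by (simp only: tau_times_tau distrib_right mult_1)
  finally show ?thesis .
qed

lemma tau_cubed: "tau ^ 3 = 2 * tau + 1"
  by (simp add: power3_eq_cube tau_times_tau algebra_simps)

lemma divide_tau: "x / tau = x * (tau - 1)"
proof -
  have "x * (tau - 1) * tau = x"
    by (simp add: algebra_simps tau_times_tau_times)
  then show ?thesis
    using tau_gt_1 by (simp add: divide_eq_eq)
qed

lemmas golden_simps = tau_squared tau_cubed divide_tau tau_times_tau tau_times_tau_times

lemma sigma_eq: "sigma = 1 - tau"
  unfolding sigma_def tau_def by (simp add: field_simps)

lemma int_plus_int_sqrt5_eq_0_iff:
  fixes a b :: int
  shows "of_int a + of_int b * sqrt 5 = 0 \<longleftrightarrow> a = 0 \<and> b = 0"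
proof
  assume eq: "of_int a + of_int b * sqrt 5 = 0"
  have "b = 0"
  proof (rule ccontr)
    assume "b \<noteq> 0"
    from eq have "(of_int a)\<^sup>2 = (of_int b * sqrt 5)\<^sup>2"
      by (simp add: eq_neg_iff_add_eq_0[symmetric])
    then have "real_of_int (a\<^sup>2) = real_of_int (5 * b\<^sup>2)"
      by (simp add: power_mult_distrib)
    then have sq: "a\<^sup>2 = 5 * b\<^sup>2"
      by (simp only: of_int_eq_iff)
    with \<open>b \<noteq> 0\<close> have "a \<noteq> 0"
      by auto
    have p: "prime_elem (5::int)"
      by simp
    have "multiplicity 5 (a\<^sup>2) = 2 * multiplicity 5 a"
      using \<open>a \<noteq> 0\<close> by (simp add: prime_elem_multiplicity_power_distrib[OF p])
    moreover have "multiplicity 5 (5 * b\<^sup>2) = Suc (2 * multiplicity 5 b)"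
      using \<open>b \<noteq> 0\<close> by (simp add: prime_elem_multiplicity_mult_distrib[OF p]
          prime_elem_multiplicity_power_distrib[OF p] multiplicity_self)
    ultimately have "2 * multiplicity 5 a = Suc (2 * multiplicity 5 b)"
      using sq by simp
    then show False
      by presburger
  qed
  with eq show "a = 0 \<and> b = 0"
    by simp
qed simp

lemma golden_scale_nonzero:
  fixes m1 m2 :: int
  assumes "(m1, m2) \<noteq> (0, 0)"
  shows "sqrt (2 / (2 + tau)) * (of_int m1 - of_int m2 + 2 * of_int m2 * tau) \<noteq> 0"
proof -
  have "of_int m1 - of_int m2 + 2 * of_int m2 * tau = of_int m1 + of_int m2 * sqrt 5"
    unfolding tau_def by (simp add: algebra_simps)
  also have "\<dots> \<noteq> 0"
    using assms by (simp add: int_plus_int_sqrt5_eq_0_iff)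
  finally show ?thesis
    using tau_gt_1 by simp
qed

section \<open>The lattice D6 and its fundamental weights\<close>

lemma exhaust_6:
  fixes x :: 6
  shows "x = 1 \<or> x = 2 \<or> x = 3 \<or> x = 4 \<or> x = 5 \<or> x = 6"
proof (induct x)
  case (of_int z)
  then have "z = 0 \<or> z = 1 \<or> z = 2 \<or> z = 3 \<or> z = 4 \<or> z = 5"
    by fastforce
  then show ?case
    by auto
qed

lemma forall_6: "(\<forall>i::6. P i) \<longleftrightarrow> P 1 \<and> P 2 \<and> P 3 \<and> P 4 \<and> P 5 \<and> P 6"
  by (metis exhaust_6)

lemma UNIV_6: "UNIV = {1, 2, 3, 4, 5, 6::6}"
  using exhaust_6 by auto

lemma sum_6: "sum f (UNIV::6 set) = f 1 + f 2 + f 3 + f 4 + f 5 + f 6"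
  unfolding UNIV_6 by (simp add: ac_simps)

lemma l_nth: "l i $ j = (if j = i then 1 else 0)"
  unfolding l_def axis_def by simp

lemma D6_iff: "x \<in> D6 \<longleftrightarrow> (\<forall>i. x $ i \<in> \<int>) \<and> (\<Sum>i\<in>UNIV. x $ i) / 2 \<in> \<int>"
proof -
  have "(\<exists>k::int. s = 2 * of_int k) \<longleftrightarrow> s / 2 \<in> \<int>" for s :: real
    by (auto simp: Ints_def)
  then show ?thesis
    unfolding D6_def by blast
qed

lemma D6_add: "x \<in> D6 \<Longrightarrow> y \<in> D6 \<Longrightarrow> x + y \<in> D6"
  unfolding D6_iff by (simp add: sum.distrib add_divide_distrib)

lemma D6_scaleR_of_int:
  assumes "x \<in> D6"
  shows "of_int k *\<^sub>R x \<in> D6"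
proof -
  have int: "\<forall>i. x $ i \<in> \<int>" and half: "(\<Sum>i\<in>UNIV. x $ i) / 2 \<in> \<int>"
    using assms unfolding D6_iff by auto
  have "(\<Sum>i\<in>UNIV. (of_int k *\<^sub>R x) $ i) / 2 = of_int k * ((\<Sum>i\<in>UNIV. x $ i) / 2)"
    by (simp add: sum_distrib_left)
  moreover have "of_int k * ((\<Sum>i\<in>UNIV. x $ i) / 2) \<in> \<int>"
    using half by (intro Ints_mult) simp_all
  ultimately show ?thesis
    unfolding D6_iff using int by (simp del: vector_scaleR_component) (simp add: Ints_mult)
qed

definition omega1 :: "real^6" where "omega1 = l 1"
definition omega2 :: "real^6" where "omega2 = l 1 + l 2"
definition omega3 :: "real^6" where "omega3 = l 1 + l 2 + l 3"
definition omega4 :: "real^6" where "omega4 = l 1 + l 2 + l 3 + l 4"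
definition omega5 :: "real^6" where "omega5 = (1/2) *\<^sub>R (l 1 + l 2 + l 3 + l 4 + l 5 - l 6)"
definition omega6 :: "real^6" where "omega6 = (1/2) *\<^sub>R (l 1 + l 2 + l 3 + l 4 + l 5 + l 6)"

lemmas omega_defs = omega1_def omega2_def omega3_def omega4_def omega5_def omega6_def

lemma double_omega_in_D6:
  "2 *\<^sub>R omega1 \<in> D6" "2 *\<^sub>R omega2 \<in> D6" "2 *\<^sub>R omega3 \<in> D6"
  "2 *\<^sub>R omega4 \<in> D6" "2 *\<^sub>R omega5 \<in> D6" "2 *\<^sub>R omega6 \<in> D6"
  by (simp_all add: D6_iff omega_defs l_nth forall_6 sum_6)

lemma linear_pi_par: "linear pi_par"
  by (rule linearI) (simp_all add: pi_par_def algebra_simps)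

lemma pi_par_coordinates:
  "pi_par x = (1 / sqrt (2 * (2 + tau))) *\<^sub>R vector
     [x$1 - x$2 + tau * x$5 - tau * x$6, tau * x$1 + tau * x$2 + x$3 + x$4, tau * x$3 - tau * x$4 + x$5 + x$6]"
  unfolding pi_par_def
  by (rule arg_cong[where f = "scaleR _"]) (simp add: vec_eq_iff forall_3 algebra_simps)

lemma pi_par_golden_pairs:
  "pi_par omega5 = tau *\<^sub>R pi_par omega1"
  "pi_par omega4 = tau *\<^sub>R pi_par omega2"
  "pi_par omega3 = tau *\<^sub>R pi_par omega6"
  by (simp_all add: pi_par_coordinates omega_defs l_nth vec_eq_iff forall_3 algebra_simps golden_simps)

text \<open>The projections
  of omega1, omega2, omega6 are multiples of the fundamental weights of H3 (vertices of an
  icosahedron, an icosidodecahedron and a dodecahedron), so the seven nonzero 0/1 choices of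
  (n1, n2, n6) give the seven Wythoff polyhedra of H3.\<close>

definition wythoff_point :: "int \<Rightarrow> int \<Rightarrow> int \<Rightarrow> int \<Rightarrow> int \<Rightarrow> real^6" where
  "wythoff_point m1 m2 n1 n2 n6 =
     of_int (m1 - m2) *\<^sub>R (of_int n1 *\<^sub>R omega1 + of_int n2 *\<^sub>R omega2 + of_int n6 *\<^sub>R omega6)
   + of_int (2 * m2) *\<^sub>R (of_int n1 *\<^sub>R omega5 + of_int n2 *\<^sub>R omega4 + of_int n6 *\<^sub>R omega3)"

definition wythoff_vertex :: "int \<Rightarrow> int \<Rightarrow> int \<Rightarrow> real^3" where
  "wythoff_vertex n1 n2 n6 =
     vector [of_int n1, of_int (n1 + 2 * n2) * tau + of_int n6 * (tau + 1), of_int n6]"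

lemma wythoff_point_in_D6:
  assumes "even (m1 + m2)"
  shows "wythoff_point m1 m2 n1 n2 n6 \<in> D6"
proof -
  obtain a where a: "m1 - m2 = 2 * a"
    using assms by (metis even_diff evenE)
  have "wythoff_point m1 m2 n1 n2 n6 =
      of_int a *\<^sub>R (of_int n1 *\<^sub>R (2 *\<^sub>R omega1) + of_int n2 *\<^sub>R (2 *\<^sub>R omega2) + of_int n6 *\<^sub>R (2 *\<^sub>R omega6))
    + of_int m2 *\<^sub>R (of_int n1 *\<^sub>R (2 *\<^sub>R omega5) + of_int n2 *\<^sub>R (2 *\<^sub>R omega4) + of_int n6 *\<^sub>R (2 *\<^sub>R omega3))"
    unfolding wythoff_point_def a by (simp add: scaleR_add_right mult_ac)
  then show ?thesis
    by (simp only:) (intro D6_add D6_scaleR_of_int double_omega_in_D6)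
qed

lemma projection_scale: "1 / sqrt (2 * (2 + tau)) = sqrt (2 / (2 + tau)) / 2"
proof -
  have "0 < sqrt (2 + tau)"
    using tau_gt_1 by simp
  moreover have "sqrt 2 * sqrt 2 = 2"
    by simp
  ultimately show ?thesis
    unfolding real_sqrt_mult real_sqrt_divide by (simp add: field_simps)
qed

lemma pi_par_wythoff_point:
  "pi_par (wythoff_point m1 m2 n1 n2 n6) =
     (sqrt (2 / (2 + tau)) * (of_int m1 - of_int m2 + 2 * of_int m2 * tau) / 2) *\<^sub>R wythoff_vertex n1 n2 n6"
proof -
  let ?w = "of_int n1 *\<^sub>R omega1 + of_int n2 *\<^sub>R omega2 + of_int n6 *\<^sub>R omega6"
  have "pi_par (wythoff_point m1 m2 n1 n2 n6) = (of_int m1 - of_int m2 + 2 * of_int m2 * tau) *\<^sub>R pi_par ?w"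
    unfolding wythoff_point_def linear_add[OF linear_pi_par] linear_cmul[OF linear_pi_par] pi_par_golden_pairs
    by (simp add: algebra_simps)
  moreover have "pi_par ?w = (sqrt (2 / (2 + tau)) / 2) *\<^sub>R wythoff_vertex n1 n2 n6"
    unfolding pi_par_coordinates projection_scale
    by (rule arg_cong[where f = "scaleR _"])
      (simp add: omega_defs l_nth wythoff_vertex_def vec_eq_iff forall_3 algebra_simps)
  ultimately show ?thesis
    by (simp add: mult.commute)
qed

section \<open>Orbits of the group H3\<close>

lemma matrix_vector_mult_vector3:
  "(vector [vector [a11, a12, a13], vector [a21, a22, a23], vector [a31, a32, a33]] :: real^3^3)
     *v vector [x1, x2, x3]
   = vector [a11 * x1 + a12 * x2 + a13 * x3, a21 * x1 + a22 * x2 + a23 * x3, a31 * x1 + a32 * x2 + a33 * x3]"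
  by (simp add: vec_eq_iff forall_3 matrix_vector_mult_def sum_3)

lemma R1_apply: "R1 *v vector [x, y, z] = vector [- x, y, z]"
  by (simp add: R1_def matrix_vector_mult_vector3)

lemma R2_apply:
  "R2 *v vector [x, y, z] = (1/2) *\<^sub>R
     vector [x + (tau - 1) * y - tau * z, (tau - 1) * x + tau * y + z, - tau * x + y + (1 - tau) * z]"
  by (simp add: R2_def sigma_eq matrix_vector_mult_vector3 scaleR_matrix_vector_assoc[symmetric]
      vec_eq_iff forall_3 algebra_simps)

lemma R3_apply: "R3 *v vector [x, y, z] = vector [x, y, - z]"
  by (simp add: R3_def matrix_vector_mult_vector3)

lemma H3_generator_involution:
  assumes "g \<in> {R1, R2, R3}"
  shows "g ** g = mat 1"
proof -
  have "R2 *v (R2 *v vector [x, y, z]) = vector [x, y, z]" for x y z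
    by (simp add: R2_apply matrix_vector_mult_scaleR vec_eq_iff forall_3 algebra_simps golden_simps)
  then show ?thesis
    using assms unfolding matrix_eq
    by (auto simp: forall_vector_3 R1_apply R3_apply matrix_vector_mul_assoc[symmetric])
qed

lemma matrix_inv_involution:
  fixes A :: "'a::semiring_1^'n^'n"
  assumes "A ** A = mat 1"
  shows "matrix_inv A = A"
proof -
  have inv: "matrix_inv A ** A = mat 1"
    unfolding matrix_inv_def by (rule someI2[of _ A]) (use assms in simp_all)
  have "matrix_inv A = matrix_inv A ** (A ** A)"
    using assms by simp
  also have "\<dots> = A"
    using inv by (simp add: matrix_mul_assoc)
  finally show ?thesis .
qed

lemma H3_orbit_self: "q \<in> H3_orbit q"
  unfolding H3_orbit_def using H3_id by force

lemma H3_orbit_generator_closed: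
  assumes "x \<in> H3_orbit q" and "g \<in> {R1, R2, R3}"
  shows "g *v x \<in> H3_orbit q"
  using assms H3_gen unfolding H3_orbit_def by (force simp: matrix_vector_mul_assoc)

lemma H3_orbit_scaleR: "H3_orbit (k *\<^sub>R v) = (*\<^sub>R) k ` H3_orbit v"
  unfolding H3_orbit_def by (auto simp: matrix_vector_mult_scaleR)

lemma H3_orbit_subsetI:
  assumes "q \<in> S" and closed: "\<And>x g. x \<in> S \<Longrightarrow> g \<in> {R1, R2, R3} \<Longrightarrow> g *v x \<in> S"
  shows "H3_orbit q \<subseteq> S"
proof -
  have "A *v q \<in> S" if "A \<in> H3" for A
    using that
  proof induction
    case H3_id
    then show ?case
      using assms(1) by simp
  next
    case (H3_gen A g)
    then show ?case
      using closed by (simp add: matrix_vector_mul_assoc[symmetric])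
  next
    case (H3_inv A g)
    then show ?case
      using closed by (simp add: matrix_inv_involution H3_generator_involution matrix_vector_mul_assoc[symmetric])
  qed
  then show ?thesis
    unfolding H3_orbit_def by blast
qed

lemma subset_H3_orbitI:
  fixes f :: "real^3 \<Rightarrow> 'a::linorder"
  assumes "finite S" "q \<in> S"
    and closed: "\<And>x g. x \<in> S \<Longrightarrow> g \<in> {R1, R2, R3} \<Longrightarrow> g *v x \<in> S"
    and ascent: "\<And>x. x \<in> S \<Longrightarrow> x \<noteq> q \<Longrightarrow> \<exists>g\<in>{R1, R2, R3}. f x < f (g *v x)"
  shows "S \<subseteq> H3_orbit q"
proof
  fix x
  assume "x \<in> S"
  then show "x \<in> H3_orbit q"
  proof (induction "card {y \<in> S. f x < f y}" arbitrary: x rule: less_induct)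
    case less
    show ?case
    proof (cases "x = q")
      case True
      then show ?thesis
        by (simp add: H3_orbit_self)
    next
      case False
      then obtain g where g: "g \<in> {R1, R2, R3}" and up: "f x < f (g *v x)"
        using ascent less.prems by blast
      have gx: "g *v x \<in> S"
        using closed less.prems g by blast
      have "{y \<in> S. f (g *v x) < f y} \<subset> {y \<in> S. f x < f y}"
        using up gx by auto
      then have "card {y \<in> S. f (g *v x) < f y} < card {y \<in> S. f x < f y}"
        using assms(1) by (simp add: psubset_card_mono)
      then have "g *v x \<in> H3_orbit q"
        using less.hyps gx by blast
      then have "g *v (g *v x) \<in> H3_orbit q"
        using g by (rule H3_orbit_generator_closed)
      then show ?thesis
        using g by (simp add: matrix_vector_mul_assoc H3_generator_involution)
    qed
  qed
qed

lemma orthogonal_matrix_uminus: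
  fixes Q :: "real^'n^'n"
  assumes "orthogonal_matrix Q"
  shows "orthogonal_matrix (- Q)"
proof -
  have "transpose (- Q) ** (- Q) = transpose Q ** Q"
    by (simp add: matrix_matrix_mult_def transpose_def vec_eq_iff)
  then show ?thesis
    using assms unfolding orthogonal_matrix by simp
qed

lemma similar_to_scaleR:
  assumes "similar_to S T" and "k \<noteq> 0"
  shows "similar_to ((*\<^sub>R) k ` S) T"
proof -
  obtain r Q b where r: "r > 0" and Q: "orthogonal_matrix Q"
    and S: "S = (\<lambda>x. r *\<^sub>R (Q *v x) + b) ` T"
    using assms(1) unfolding similar_to_def by blast
  define Q' where "Q' = (if k > 0 then Q else - Q)"
  have neg: "(- Q) *v x = - (Q *v x)" for x
    by (simp add: matrix_vector_mult_def vec_eq_iff sum_negf)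
  have "orthogonal_matrix Q'"
    using Q by (simp add: Q'_def orthogonal_matrix_uminus)
  moreover have "k *\<^sub>R (r *\<^sub>R (Q *v x) + b) = (\<bar>k\<bar> * r) *\<^sub>R (Q' *v x) + k *\<^sub>R b" for x
    using neg by (simp add: Q'_def algebra_simps)
  ultimately show ?thesis
    unfolding similar_to_def S image_image using r assms(2) by (intro exI[of _ "\<bar>k\<bar> * r"]) auto
qed

lemma similar_to_orthogonal_image: "orthogonal_matrix Q \<Longrightarrow> similar_to ((*v) Q ` T) T"
  unfolding similar_to_def by (intro exI[of _ 1] exI[of _ Q] exI[of _ 0]) auto

definition swap23 :: "real^3^3" where
  "swap23 = vector [vector [1, 0, 0], vector [0, 0, 1], vector [0, 1, 0]]"

lemma swap23_apply: "swap23 *v vector [x, y, z] = vector [x, z, y]"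
  by (simp add: swap23_def matrix_vector_mult_vector3)

lemma orthogonal_matrix_swap23: "orthogonal_matrix swap23"
proof -
  have "transpose swap23 = swap23"
    by (simp add: swap23_def transpose_def vec_eq_iff forall_3)
  moreover have "swap23 ** swap23 = mat 1"
    unfolding matrix_eq by (simp add: forall_vector_3 swap23_apply matrix_vector_mul_assoc[symmetric])
  ultimately show ?thesis
    by (simp add: orthogonal_matrix)
qed

section \<open>Exact arithmetic in Z[tau]\<close>

type_synonym ztau = "int \<times> int"

fun ztau_real :: "ztau \<Rightarrow> real" where
  "ztau_real (a, b) = of_int a + of_int b * tau"

fun ztau_add :: "ztau \<Rightarrow> ztau \<Rightarrow> ztau" where
  "ztau_add (a, b) (c, d) = (a + c, b + d)"

fun ztau_mult :: "ztau \<Rightarrow> ztau \<Rightarrow> ztau" where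
  "ztau_mult (a, b) (c, d) = (a * c + b * d, a * d + b * c + b * d)"

fun ztau_neg :: "ztau \<Rightarrow> ztau" where
  "ztau_neg (a, b) = (- a, - b)"

fun ztau_smult :: "int \<Rightarrow> ztau \<Rightarrow> ztau" where
  "ztau_smult k (a, b) = (k * a, k * b)"

fun ztau_even :: "ztau \<Rightarrow> bool" where
  "ztau_even (a, b) \<longleftrightarrow> even a \<and> even b"

fun ztau_half :: "ztau \<Rightarrow> ztau" where
  "ztau_half (a, b) = (a div 2, b div 2)"

text \<open>Exact sign test: a + b tau = (u + b sqrt 5) / 2 with u = 2 a + b.\<close>

fun ztau_pos :: "ztau \<Rightarrow> bool" where
  "ztau_pos (a, b) \<longleftrightarrow>
     (let u = 2 * a + b in if 0 \<le> b then 0 < u \<or> u * u < 5 * b * b else 0 < u \<and> 5 * b * b < u * u)"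

lemma ztau_real_add: "ztau_real (ztau_add x y) = ztau_real x + ztau_real y"
  by (cases x; cases y) (simp add: algebra_simps)

lemma ztau_real_mult: "ztau_real (ztau_mult x y) = ztau_real x * ztau_real y"
  by (cases x; cases y) (simp add: algebra_simps golden_simps)

lemma ztau_real_neg: "ztau_real (ztau_neg x) = - ztau_real x"
  by (cases x) simp

lemma ztau_real_smult: "ztau_real (ztau_smult k x) = of_int k * ztau_real x"
  by (cases x) (simp add: algebra_simps)

lemma ztau_real_half: "ztau_even x \<Longrightarrow> ztau_real (ztau_half x) = ztau_real x / 2"
  by (cases x) (auto elim!: evenE simp: field_simps)

lemma ztau_pos_sound:
  assumes "ztau_pos x"
  shows "0 < ztau_real x"
proof (cases x)
  case (Pair a b)
  define u where "u = 2 * a + b"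
  have sq: "(r * sqrt 5)\<^sup>2 = 5 * r\<^sup>2" for r :: real
    by (simp add: power_mult_distrib)
  have "0 < of_int u + of_int b * sqrt 5"
  proof (cases "0 \<le> b")
    case True
    then have "0 < u \<or> u\<^sup>2 < 5 * b\<^sup>2"
      using assms Pair u_def by (simp add: Let_def power2_eq_square algebra_simps)
    moreover have "- of_int u < of_int b * sqrt 5" if "u\<^sup>2 < 5 * b\<^sup>2"
    proof (rule power2_less_imp_less)
      have "real_of_int (u\<^sup>2) < real_of_int (5 * b\<^sup>2)"
        using that by (simp only: of_int_less_iff)
      then show "(- of_int u)\<^sup>2 < (of_int b * sqrt 5)\<^sup>2"
        by (simp add: sq)
      show "0 \<le> of_int b * sqrt 5"
        using True by simp
    qed
    ultimately show ?thesis
      using True by (auto intro: add_pos_nonneg)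
  next
    case False
    then have pos: "0 < u" and "5 * b\<^sup>2 < u\<^sup>2"
      using assms Pair u_def by (simp_all add: Let_def power2_eq_square algebra_simps)
    have "- (of_int b * sqrt 5) < of_int u"
    proof (rule power2_less_imp_less)
      have "real_of_int (5 * b\<^sup>2) < real_of_int (u\<^sup>2)"
        using \<open>5 * b\<^sup>2 < u\<^sup>2\<close> by (simp only: of_int_less_iff)
      then show "(- (of_int b * sqrt 5))\<^sup>2 < (of_int u)\<^sup>2"
        by (simp add: sq)
      show "0 \<le> real_of_int u"
        using pos by simp
    qed
    then show ?thesis
      by linarith
  qed
  then show ?thesis
    using Pair by (simp add: u_def tau_def field_simps)
qed

section \<open>Certified orbits\<close>

type_synonym zpoint = "ztau \<times> ztau \<times> ztau"

fun zpoint_vec :: "zpoint \<Rightarrow> real^3" where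
  "zpoint_vec (x, y, z) = vector [ztau_real x / 2, ztau_real y / 2, ztau_real z / 2]"

fun zR1 :: "zpoint \<Rightarrow> zpoint" where
  "zR1 (x, y, z) = (ztau_neg x, y, z)"

fun zR3 :: "zpoint \<Rightarrow> zpoint" where
  "zR3 (x, y, z) = (x, y, ztau_neg z)"

text \<open>2 R2 has entries in Z[tau]: -sigma = tau - 1.\<close>

fun zR2_double :: "zpoint \<Rightarrow> zpoint" where
  "zR2_double (x, y, z) =
     (ztau_add (ztau_add x (ztau_mult (-1, 1) y)) (ztau_mult (0, -1) z),
      ztau_add (ztau_add (ztau_mult (-1, 1) x) (ztau_mult (0, 1) y)) z,
      ztau_add (ztau_add (ztau_mult (0, -1) x) y) (ztau_mult (1, -1) z))"

definition zR2_exact :: "zpoint \<Rightarrow> bool" where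
  "zR2_exact p \<longleftrightarrow> (case zR2_double p of (x, y, z) \<Rightarrow> ztau_even x \<and> ztau_even y \<and> ztau_even z)"

definition zR2 :: "zpoint \<Rightarrow> zpoint" where
  "zR2 p = (case zR2_double p of (x, y, z) \<Rightarrow> (ztau_half x, ztau_half y, ztau_half z))"

fun zpoint_swap23 :: "zpoint \<Rightarrow> zpoint" where
  "zpoint_swap23 (x, y, z) = (x, z, y)"

lemma R1_zpoint_vec: "R1 *v zpoint_vec p = zpoint_vec (zR1 p)"
  by (cases p rule: prod_cases3) (simp add: R1_apply ztau_real_neg)

lemma R3_zpoint_vec: "R3 *v zpoint_vec p = zpoint_vec (zR3 p)"
  by (cases p rule: prod_cases3) (simp add: R3_apply ztau_real_neg)

lemma R2_zpoint_vec:
  assumes "zR2_exact p"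
  shows "R2 *v zpoint_vec p = zpoint_vec (zR2 p)"
proof -
  obtain x y z where p: "p = (x, y, z)"
    by (cases p rule: prod_cases3)
  obtain u v w where d: "zR2_double p = (u, v, w)"
    by (cases "zR2_double p" rule: prod_cases3)
  have "ztau_real u = ztau_real x + (tau - 1) * ztau_real y - tau * ztau_real z"
       "ztau_real v = (tau - 1) * ztau_real x + tau * ztau_real y + ztau_real z"
       "ztau_real w = - tau * ztau_real x + ztau_real y + (1 - tau) * ztau_real z"
    using arg_cong[OF d, of "\<lambda>(u, v, w). (ztau_real u, ztau_real v, ztau_real w)"]
    by (simp_all add: p ztau_real_add ztau_real_mult algebra_simps)
  moreover have "ztau_even u" "ztau_even v" "ztau_even w"
    using assms d unfolding zR2_exact_def by simp_all
  moreover have "zR2 p = (ztau_half u, ztau_half v, ztau_half w)"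
    unfolding zR2_def d by simp
  ultimately show ?thesis
    by (simp add: R2_apply p ztau_real_half vec_eq_iff forall_3 field_simps)
qed

lemma zpoint_swap23_involution: "zpoint_swap23 (zpoint_swap23 p) = p"
  by (cases p rule: prod_cases3) simp

lemma zpoint_vec_swap23: "zpoint_vec (zpoint_swap23 p) = swap23 *v zpoint_vec p"
  by (cases p rule: prod_cases3) (simp add: swap23_apply)

text \<open>The direction (1, 5, 1) lies inside the chamber bounded by the mirrors of R1, R2, R3 that
  contains the seed vertices used below, so every other orbit point has a mirror across which
  the height increases.\<close>

definition height :: "real^3 \<Rightarrow> real" where
  "height v = v $ 1 + 5 * v $ 2 + v $ 3"

fun zheight :: "zpoint \<Rightarrow> ztau" where
  "zheight (x, y, z) = ztau_add (ztau_add x (ztau_mult (5, 0) y)) z"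

definition zascends :: "zpoint \<Rightarrow> zpoint \<Rightarrow> bool" where
  "zascends p q \<longleftrightarrow> ztau_pos (ztau_add (zheight q) (ztau_neg (zheight p)))"

lemma zascends_sound: "zascends p q \<Longrightarrow> height (zpoint_vec p) < height (zpoint_vec q)"
  unfolding zascends_def height_def
  by (drule ztau_pos_sound, cases p rule: prod_cases3, cases q rule: prod_cases3)
    (simp add: ztau_real_add ztau_real_mult ztau_real_neg)

definition H3_orbit_certificate :: "(zpoint \<Rightarrow> bool) \<Rightarrow> zpoint \<Rightarrow> zpoint list \<Rightarrow> bool" where
  "H3_orbit_certificate M p L \<longleftrightarrow> M p \<and>
     (\<forall>x\<in>set L. M (zR1 x) \<and> M (zR3 x) \<and> zR2_exact x \<and> M (zR2 x)
        \<and> (x \<noteq> p \<longrightarrow> zascends x (zR1 x) \<or> zascends x (zR3 x) \<or> zascends x (zR2 x)))"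

lemma H3_orbit_eq_by_certificate:
  assumes "H3_orbit_certificate M p L" and sound: "\<And>x. M x \<Longrightarrow> x \<in> set L"
  shows "H3_orbit (zpoint_vec p) = zpoint_vec ` set L"
proof
  have cert: "M p" "\<And>x. x \<in> set L \<Longrightarrow> M (zR1 x) \<and> M (zR3 x) \<and> zR2_exact x \<and> M (zR2 x)
      \<and> (x \<noteq> p \<longrightarrow> zascends x (zR1 x) \<or> zascends x (zR3 x) \<or> zascends x (zR2 x))"
    using assms(1) unfolding H3_orbit_certificate_def by blast+
  have p: "zpoint_vec p \<in> zpoint_vec ` set L"
    using cert(1) sound by blast
  have closed: "g *v v \<in> zpoint_vec ` set L"
    if v: "v \<in> zpoint_vec ` set L" and g: "g \<in> {R1, R2, R3}" for v g
  proof -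
    obtain x where x: "x \<in> set L" "v = zpoint_vec x"
      using v by blast
    then have "zR1 x \<in> set L" "zR3 x \<in> set L" "zR2 x \<in> set L" "zR2_exact x"
      using cert(2) sound by blast+
    then show ?thesis
      using g x(2) by (auto simp only: R1_zpoint_vec R2_zpoint_vec R3_zpoint_vec insert_iff image_eqI)
  qed
  show "H3_orbit (zpoint_vec p) \<subseteq> zpoint_vec ` set L"
    using p closed by (rule H3_orbit_subsetI)
  have ascent: "\<exists>g\<in>{R1, R2, R3}. height v < height (g *v v)"
    if v: "v \<in> zpoint_vec ` set L" "v \<noteq> zpoint_vec p" for v
  proof -
    obtain x where x: "x \<in> set L" "v = zpoint_vec x" "x \<noteq> p"
      using v by blast
    then have "zR2_exact x" "zascends x (zR1 x) \<or> zascends x (zR3 x) \<or> zascends x (zR2 x)"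
      using cert(2) by auto
    then show ?thesis
      using x zascends_sound R2_zpoint_vec by (metis R1_zpoint_vec R3_zpoint_vec insertCI)
  qed
  show "zpoint_vec ` set L \<subseteq> H3_orbit (zpoint_vec p)"
    by (rule subset_H3_orbitI[OF finite_imageI[OF finite_set] p closed ascent])
qed

definition zEP :: "ztau \<Rightarrow> ztau \<Rightarrow> ztau \<Rightarrow> zpoint list" where
  "zEP a b c = concat
     [[(ztau_smult s1 a, ztau_smult s2 b, ztau_smult s3 c), (ztau_smult s2 b, ztau_smult s3 c, ztau_smult s1 a),
       (ztau_smult s3 c, ztau_smult s1 a, ztau_smult s2 b)].
      s1 \<leftarrow> [1, -1], s2 \<leftarrow> [1, -1], s3 \<leftarrow> [1, -1]]"

lemma EP_eq_zEP: "EP (ztau_real a / 2) (ztau_real b / 2) (ztau_real c / 2) = zpoint_vec ` set (zEP a b c)"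
  by (simp add: EP_def zEP_def ztau_real_smult insert_commute)

definition ztau_pm :: "ztau \<Rightarrow> ztau \<Rightarrow> bool" where
  "ztau_pm u v \<longleftrightarrow> u = v \<or> u = ztau_neg v"

fun in_zEP :: "ztau \<Rightarrow> ztau \<Rightarrow> ztau \<Rightarrow> zpoint \<Rightarrow> bool" where
  "in_zEP a b c (x, y, z) \<longleftrightarrow>
     ztau_pm x a \<and> ztau_pm y b \<and> ztau_pm z c \<or> ztau_pm x b \<and> ztau_pm y c \<and> ztau_pm z a
     \<or> ztau_pm x c \<and> ztau_pm y a \<and> ztau_pm z b"

lemma ztau_pm_sign: "ztau_pm u v \<Longrightarrow> \<exists>s\<in>{1, -1}. u = ztau_smult s v"
  by (cases v) (auto simp: ztau_pm_def)

lemma in_zEP_sound: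
  assumes "in_zEP a b c p"
  shows "p \<in> set (zEP a b c)"
proof -
  have mem: "(ztau_smult s1 a, ztau_smult s2 b, ztau_smult s3 c) \<in> set (zEP a b c)
      \<and> (ztau_smult s2 b, ztau_smult s3 c, ztau_smult s1 a) \<in> set (zEP a b c)
      \<and> (ztau_smult s3 c, ztau_smult s1 a, ztau_smult s2 b) \<in> set (zEP a b c)"
    if "s1 \<in> {1, -1}" "s2 \<in> {1, -1}" "s3 \<in> {1, -1}" for s1 s2 s3
    using that by (elim insertE emptyE) (simp_all add: zEP_def del: ztau_smult.simps)
  obtain x y z where p: "p = (x, y, z)"
    by (cases p rule: prod_cases3)
  show ?thesis
    using assms mem ztau_pm_sign unfolding p in_zEP.simps by metis
qed

definition zEP_list :: "(ztau \<times> ztau \<times> ztau) list \<Rightarrow> zpoint list" where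
  "zEP_list reps = concat (map (\<lambda>(a, b, c). zEP a b c) reps)"

definition in_zEP_list :: "(ztau \<times> ztau \<times> ztau) list \<Rightarrow> zpoint \<Rightarrow> bool" where
  "in_zEP_list reps p \<longleftrightarrow> (\<exists>(a, b, c)\<in>set reps. in_zEP a b c p)"

lemma in_zEP_list_sound:
  assumes "in_zEP_list reps p"
  shows "p \<in> set (zEP_list reps)"
proof -
  obtain a b c where abc: "(a, b, c) \<in> set reps" and p: "p \<in> set (zEP a b c)"
    using assms in_zEP_sound unfolding in_zEP_list_def by blast
  from abc have "zEP a b c \<in> set (map (\<lambda>(a, b, c). zEP a b c) reps)"
    by (metis (no_types) case_prod_conv image_eqI set_map)
  then show ?thesis
    unfolding zEP_list_def set_concat using p by (rule UN_I)
qed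

definition EP_union :: "(ztau \<times> ztau \<times> ztau) list \<Rightarrow> (real^3) set" where
  "EP_union reps = (\<Union>(a, b, c)\<in>set reps. EP (ztau_real a / 2) (ztau_real b / 2) (ztau_real c / 2))"

lemma EP_union_Nil: "EP_union [] = {}"
  by (simp add: EP_union_def)

lemma EP_union_Cons:
  "EP_union ((a, b, c) # reps) = EP (ztau_real a / 2) (ztau_real b / 2) (ztau_real c / 2) \<union> EP_union reps"
  by (simp add: EP_union_def)

lemma EP_union_eq_zEP_list: "EP_union reps = zpoint_vec ` set (zEP_list reps)"
  unfolding EP_union_def zEP_list_def by (simp add: image_UN EP_eq_zEP split_def)

text \<open>T permutes coordinates to match the orbit with the standard vertex list; r rescales
  the vertex to the size of the standard polyhedron.\<close>

lemma similar_to_H3_orbit_by_certificate: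
  fixes T :: "zpoint \<Rightarrow> zpoint"
  assumes Q: "orthogonal_matrix Q" and T: "\<And>x. zpoint_vec (T x) = Q *v zpoint_vec x" "\<And>x. T (T x) = x"
    and cert: "H3_orbit_certificate (\<lambda>x. in_zEP_list reps (T x)) p (map T (zEP_list reps))"
    and v: "v = r *\<^sub>R zpoint_vec p" "r \<noteq> 0" and k: "k \<noteq> 0"
    and P: "P = EP_union reps"
  shows "similar_to (H3_orbit (k *\<^sub>R v)) P"
proof -
  have "x \<in> set (map T (zEP_list reps))" if "in_zEP_list reps (T x)" for x
    using in_zEP_list_sound[OF that] T(2)[of x] by (metis image_eqI set_map)
  with cert have "H3_orbit (zpoint_vec p) = zpoint_vec ` set (map T (zEP_list reps))"
    by (rule H3_orbit_eq_by_certificate)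
  also have "\<dots> = (*v) Q ` EP_union reps"
    by (simp add: EP_union_eq_zEP_list image_image T(1))
  finally have "H3_orbit (k *\<^sub>R v) = (*\<^sub>R) (k * r) ` (*v) Q ` P"
    unfolding v P H3_orbit_scaleR by (simp add: image_image)
  then show ?thesis
    using similar_to_scaleR similar_to_orthogonal_image Q k v(2) by (metis mult_eq_0_iff)
qed

lemmas similar_to_H3_orbit_by_certificate_id =
  similar_to_H3_orbit_by_certificate[where T = id, OF orthogonal_matrix_id, simplified]

lemmas similar_to_H3_orbit_by_certificate_swap23 =
  similar_to_H3_orbit_by_certificate[OF orthogonal_matrix_swap23 zpoint_vec_swap23 zpoint_swap23_involution]

lemma icosahedron_orbit:
  assumes "k \<noteq> 0"
  shows "similar_to (H3_orbit (k *\<^sub>R vector [1, tau, 0])) std_icosahedron"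
  by (rule similar_to_H3_orbit_by_certificate_id[OF _ _ _ assms, where r = 1
        and p = "((2, 0), (0, 2), (0, 0))"
        and reps = "[((0, 0), (2, 0), (0, 2))]"])
    (code_simp, simp add: vec_eq_iff forall_3 golden_simps field_simps, use tau_gt_1 in simp,
     (simp only: std_icosahedron_def EP_union_Cons EP_union_Nil Un_empty_right Un_assoc),
     (intro arg_cong2[where f = "(\<union>)"] arg_cong3[where f = EP]; simp add: golden_simps field_simps))

lemma dodecahedron_orbit:
  assumes "k \<noteq> 0"
  shows "similar_to (H3_orbit (k *\<^sub>R vector [0, tau\<^sup>2, 1])) std_dodecahedron"
  by (rule similar_to_H3_orbit_by_certificate_swap23[OF _ _ _ assms, where r = tau
        and p = "((0, 0), (0, 2), (-2, 2))"
        and reps = "[((2, 0), (2, 0), (2, 0)), ((0, 0), (-2, 2), (0, 2))]"])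
    (code_simp, simp add: vec_eq_iff forall_3 golden_simps field_simps, use tau_gt_1 in simp,
     (simp only: std_dodecahedron_def EP_union_Cons EP_union_Nil Un_empty_right Un_assoc),
     (intro arg_cong2[where f = "(\<union>)"] arg_cong3[where f = EP]; simp add: golden_simps field_simps))

lemma icosidodecahedron_orbit:
  assumes "k \<noteq> 0"
  shows "similar_to (H3_orbit (k *\<^sub>R vector [0, tau, 0])) std_icosidodecahedron"
  by (rule similar_to_H3_orbit_by_certificate_swap23[OF _ _ _ assms, where r = 1
        and p = "((0, 0), (0, 2), (0, 0))"
        and reps = "[((0, 0), (0, 0), (0, 2)), ((1, 0), (0, 1), (1, 1))]"])
    (code_simp, simp add: vec_eq_iff forall_3 golden_simps field_simps, use tau_gt_1 in simp,
     (simp only: std_icosidodecahedron_def EP_union_Cons EP_union_Nil Un_empty_right Un_assoc),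
     (intro arg_cong2[where f = "(\<union>)"] arg_cong3[where f = EP]; simp add: golden_simps field_simps))

lemma truncated_icosahedron_orbit:
  assumes "k \<noteq> 0"
  shows "similar_to (H3_orbit (k *\<^sub>R vector [1, 3 * tau, 0])) std_truncated_icosahedron"
  by (rule similar_to_H3_orbit_by_certificate_id[OF _ _ _ assms, where r = 1
        and p = "((2, 0), (0, 6), (0, 0))"
        and reps = "[((0, 0), (2, 0), (0, 6)), ((2, 0), (4, 2), (0, 4)), ((0, 2), (4, 0), (2, 4))]"])
    (code_simp, simp add: vec_eq_iff forall_3 golden_simps field_simps, use tau_gt_1 in simp,
     (simp only: std_truncated_icosahedron_def EP_union_Cons EP_union_Nil Un_empty_right Un_assoc),
     (intro arg_cong2[where f = "(\<union>)"] arg_cong3[where f = EP]; simp add: golden_simps field_simps))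

lemma small_rhombicosidodecahedron_orbit:
  assumes "k \<noteq> 0"
  shows "similar_to (H3_orbit (k *\<^sub>R vector [1, 2 * tau + 1, 1])) std_small_rhombicosidodecahedron"
  by (rule similar_to_H3_orbit_by_certificate_swap23[OF _ _ _ assms, where r = 1
        and p = "((2, 0), (2, 4), (2, 0))"
        and reps = "[((2, 0), (2, 0), (2, 4)), ((2, 2), (0, 2), (0, 4)), ((4, 2), (0, 0), (2, 2))]"])
    (code_simp, simp add: vec_eq_iff forall_3 golden_simps field_simps, use tau_gt_1 in simp,
     (simp only: std_small_rhombicosidodecahedron_def EP_union_Cons EP_union_Nil Un_empty_right Un_assoc),
     (intro arg_cong2[where f = "(\<union>)"] arg_cong3[where f = EP]; simp add: golden_simps field_simps))

lemma truncated_dodecahedron_orbit: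
  assumes "k \<noteq> 0"
  shows "similar_to (H3_orbit (k *\<^sub>R vector [0, 3 * tau + 1, 1])) std_truncated_dodecahedron"
  by (rule similar_to_H3_orbit_by_certificate_swap23[OF _ _ _ assms, where r = tau
        and p = "((0, 0), (4, 2), (-2, 2))"
        and reps = "[((0, 0), (-2, 2), (4, 2)), ((-2, 2), (0, 2), (0, 4)), ((0, 2), (4, 0), (2, 2))]"])
    (code_simp, simp add: vec_eq_iff forall_3 golden_simps field_simps, use tau_gt_1 in simp,
     (simp only: std_truncated_dodecahedron_def EP_union_Cons EP_union_Nil Un_empty_right Un_assoc),
     (intro arg_cong2[where f = "(\<union>)"] arg_cong3[where f = EP]; simp add: golden_simps field_simps))

lemma great_rhombicosidodecahedron_orbit:
  assumes "k \<noteq> 0"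
  shows "similar_to (H3_orbit (k *\<^sub>R vector [1, 4 * tau + 1, 1])) std_great_rhombicosidodecahedron"
  by (rule similar_to_H3_orbit_by_certificate_swap23[OF _ _ _ assms, where r = tau
        and p = "((-2, 2), (6, 2), (-2, 2))"
        and reps = "[((-2, 2), (-2, 2), (6, 2)), ((-4, 4), (0, 2), (2, 4)), ((-2, 2), (2, 2), (-2, 6)),
          ((-2, 4), (4, 0), (4, 2)), ((0, 2), (6, 0), (0, 4))]"])
    (code_simp, simp add: vec_eq_iff forall_3 golden_simps field_simps, use tau_gt_1 in simp,
     (simp only: std_great_rhombicosidodecahedron_def EP_union_Cons EP_union_Nil Un_empty_right Un_assoc),
     (intro arg_cong2[where f = "(\<union>)"] arg_cong3[where f = EP]; simp add: golden_simps field_simps))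

lemma lattice_vectors_as_wythoff_points:
  "of_int m1 *\<^sub>R l 1 + of_int m2 *\<^sub>R (l 2 + l 3 + l 4 + l 5 - l 6) = wythoff_point m1 m2 1 0 0"
  "(1/2) *\<^sub>R (of_int (m1 + 3*m2) *\<^sub>R (l 1 + l 2 + l 3) + of_int (m1 - m2) *\<^sub>R (l 4 + l 5 + l 6))
     = wythoff_point m1 m2 0 0 1"
  "of_int (m1 + m2) *\<^sub>R (l 1 + l 2) + of_int (2*m2) *\<^sub>R (l 3 + l 4) = wythoff_point m1 m2 0 1 0"
  "of_int (2*m1 + m2) *\<^sub>R l 1 + of_int (m1 + 2*m2) *\<^sub>R l 2
     + of_int m2 *\<^sub>R (3 *\<^sub>R l 3 + 3 *\<^sub>R l 4 + l 5 - l 6) = wythoff_point m1 m2 1 1 0"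
  "(1/2) *\<^sub>R (of_int (3*(m1 + m2)) *\<^sub>R l 1 + of_int (m1 + 5*m2) *\<^sub>R (l 2 + l 3)
     + of_int (m1 + m2) *\<^sub>R (l 4 + l 5) + of_int (m1 - 3*m2) *\<^sub>R l 6) = wythoff_point m1 m2 1 0 1"
  "(1/2) *\<^sub>R (of_int (3*m1 + 5*m2) *\<^sub>R (l 1 + l 2) + of_int (m1 + 7*m2) *\<^sub>R l 3
     + of_int (m1 + 3*m2) *\<^sub>R l 4 + of_int (m1 - m2) *\<^sub>R (l 5 + l 6)) = wythoff_point m1 m2 0 1 1"
  "(1/2) *\<^sub>R (of_int (5*(m1 + m2)) *\<^sub>R l 1 + of_int (3*m1 + 7*m2) *\<^sub>R l 2
     + of_int (m1 + 9*m2) *\<^sub>R l 3 + of_int (m1 + 5*m2) *\<^sub>R l 4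
     + of_int (m1 + m2) *\<^sub>R l 5 + of_int (m1 - 3*m2) *\<^sub>R l 6) = wythoff_point m1 m2 1 1 1"
  by (simp_all add: wythoff_point_def omega_defs l_nth vec_eq_iff forall_6 field_simps)

lemma wythoff_vertex_values:
  "wythoff_vertex 1 0 0 = vector [1, tau, 0]"
  "wythoff_vertex 0 0 1 = vector [0, tau\<^sup>2, 1]"
  "wythoff_vertex 0 1 0 = 2 *\<^sub>R vector [0, tau, 0]"
  "wythoff_vertex 1 1 0 = vector [1, 3 * tau, 0]"
  "wythoff_vertex 1 0 1 = vector [1, 2 * tau + 1, 1]"
  "wythoff_vertex 0 1 1 = vector [0, 3 * tau + 1, 1]"
  "wythoff_vertex 1 1 1 = vector [1, 4 * tau + 1, 1]"
  by (simp_all add: wythoff_vertex_def vec_eq_iff forall_3 golden_simps algebra_simps)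

theorem mainTheorem1:
  fixes m1 m2 :: int
  assumes "even (m1 + m2)" and "(m1, m2) \<noteq> (0, 0)"
  defines "c \<equiv> sqrt (2 / (2 + tau)) * (of_int m1 - of_int m2 + 2 * of_int m2 * tau)"
  shows
   "(let lam = of_int m1 *\<^sub>R l 1 + of_int m2 *\<^sub>R (l 2 + l 3 + l 4 + l 5 - l 6)
     in lam \<in> D6 \<and> pi_par lam = (c/2) *\<^sub>R vector [1, tau, 0]
        \<and> similar_to (H3_orbit (pi_par lam)) std_icosahedron)
  \<and> (let lam = (1/2) *\<^sub>R (of_int (m1 + 3*m2) *\<^sub>R (l 1 + l 2 + l 3) + of_int (m1 - m2) *\<^sub>R (l 4 + l 5 + l 6))
     in lam \<in> D6 \<and> pi_par lam = (c/2) *\<^sub>R vector [0, tau^2, 1]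
        \<and> similar_to (H3_orbit (pi_par lam)) std_dodecahedron)
  \<and> (let lam = of_int (m1 + m2) *\<^sub>R (l 1 + l 2) + of_int (2*m2) *\<^sub>R (l 3 + l 4)
     in lam \<in> D6 \<and> pi_par lam = c *\<^sub>R vector [0, tau, 0]
        \<and> similar_to (H3_orbit (pi_par lam)) std_icosidodecahedron)
  \<and> (let lam = of_int (2*m1 + m2) *\<^sub>R l 1 + of_int (m1 + 2*m2) *\<^sub>R l 2
               + of_int m2 *\<^sub>R (3 *\<^sub>R l 3 + 3 *\<^sub>R l 4 + l 5 - l 6)
     in lam \<in> D6 \<and> pi_par lam = (c/2) *\<^sub>R vector [1, 3*tau, 0]
        \<and> similar_to (H3_orbit (pi_par lam)) std_truncated_icosahedron)
  \<and> (let lam = (1/2) *\<^sub>R (of_int (3*(m1 + m2)) *\<^sub>R l 1 + of_int (m1 + 5*m2) *\<^sub>R (l 2 + l 3)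
               + of_int (m1 + m2) *\<^sub>R (l 4 + l 5) + of_int (m1 - 3*m2) *\<^sub>R l 6)
     in lam \<in> D6 \<and> pi_par lam = (c/2) *\<^sub>R vector [1, 2*tau + 1, 1]
        \<and> similar_to (H3_orbit (pi_par lam)) std_small_rhombicosidodecahedron)
  \<and> (let lam = (1/2) *\<^sub>R (of_int (3*m1 + 5*m2) *\<^sub>R (l 1 + l 2) + of_int (m1 + 7*m2) *\<^sub>R l 3
               + of_int (m1 + 3*m2) *\<^sub>R l 4 + of_int (m1 - m2) *\<^sub>R (l 5 + l 6))
     in lam \<in> D6 \<and> pi_par lam = (c/2) *\<^sub>R vector [0, 3*tau + 1, 1]
        \<and> similar_to (H3_orbit (pi_par lam)) std_truncated_dodecahedron)
  \<and> (let lam = (1/2) *\<^sub>R (of_int (5*(m1 + m2)) *\<^sub>R l 1 + of_int (3*m1 + 7*m2) *\<^sub>R l 2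
               + of_int (m1 + 9*m2) *\<^sub>R l 3 + of_int (m1 + 5*m2) *\<^sub>R l 4
               + of_int (m1 + m2) *\<^sub>R l 5 + of_int (m1 - 3*m2) *\<^sub>R l 6)
     in lam \<in> D6 \<and> pi_par lam = (c/2) *\<^sub>R vector [1, 4*tau + 1, 1]
        \<and> similar_to (H3_orbit (pi_par lam)) std_great_rhombicosidodecahedron)"
proof -
  have "c \<noteq> 0"
    unfolding c_def using assms(2) by (rule golden_scale_nonzero)
  have projection: "pi_par (wythoff_point m1 m2 n1 n2 n6) = (c / 2) *\<^sub>R wythoff_vertex n1 n2 n6" for n1 n2 n6
    unfolding c_def by (rule pi_par_wythoff_point)
  show ?thesis
    unfolding Let_def lattice_vectors_as_wythoff_points projection wythoff_vertex_values
    using wythoff_point_in_D6[OF assms(1)] \<open>c \<noteq> 0\<close>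
    by (simp add: icosahedron_orbit dodecahedron_orbit icosidodecahedron_orbit
        truncated_icosahedron_orbit small_rhombicosidodecahedron_orbit
        truncated_dodecahedron_orbit great_rhombicosidodecahedron_orbit)
qed

end
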